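(* Let $-\infty\le a<b\le\infty$, let $f,g$ be differentiable on $(a,b)$ with $g'\ne0$ on $(a,b)$, and suppose $\lim_{x\to a^+}f(x)=\lim_{x\to a^+}g(x)=0$. Let $H_{f,g}=\frac{f'}{g'}g-f$ and $H_{f,g}(b^-)=\lim_{x\to b^-}H_{f,g}(x)\in[-\infty,\infty]$. (A) Suppose there is $c\in(a,b)$ such that $f'/g'$ is strictly increasing on $(a,c)$ and strictly decreasing on $(c,b)$. Then: (i) if $\operatorname{sgn}(g')\cdot\operatorname{sgn}(H_{f,g}(b^-))\ge 0$, $f/g$ is strictly increasing on $(a,b)$; (ii) if $\operatorname{sgn}(g')\cdot\operatorname{sgn}(H_{f,g}(b^-))<0$, there is a unique $x_a\in(a,b)$ such that $f/g$ is strictly increasing on $(a,x_a)$ and strictly decreasing on $(x_a,b)$. (B) Suppose there is $c\in(a,b)$ such that $f'/g'$ is strictly decreasing on $(a,c)$ and strictly increasing on $(c,b)$. Then: (i) if $\operatorname{sgn}(g')\cdot\operatorname{sgn}(H_{f,g}(b^-))\le 0$, $f/g$ is strictly decreasing on $(a,b)$; (ii) if $\operatorname{sgn}(g')\cdot\operatorname{sgn}(H_{f,g}(b^-))>0$, there is a unique $x_a\in(a,b)$ such that $f/g$ is strictly decreasing on $(a,x_a)$ and strictly increasing on $(x_a,b)$.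
   Context: $H_{f,g}(x)=\frac{f'(x)}{g'(x)}g(x)-f(x)$ for $x\in(a,b)$. Here $\operatorname{sgn}(g')$ is the (constant) sign of $g'$ on $(a,b)$, and $\operatorname{sgn}(\pm\infty)=\pm1$. *)

theory Defs
  imports "HOL-Analysis.Analysis"
begin

definition eoi :: "ereal \<Rightarrow> ereal \<Rightarrow> real set" where
  "eoi a b = {x::real. a < ereal x \<and> ereal x < b}"

definition at_right_e :: "ereal \<Rightarrow> real filter" where
  "at_right_e a = (if a = -\<infinity> then at_bot else at_right (real_of_ereal a))"

definition at_left_e :: "ereal \<Rightarrow> real filter" where
  "at_left_e b = (if b = \<infinity> then at_top else at_left (real_of_ereal b))"

definition esgn :: "ereal \<Rightarrow> real" where
  "esgn L = (if L > 0 then 1 else if L < 0 then -1 else 0)"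

definition Hfg :: "(real \<Rightarrow> real) \<Rightarrow> (real \<Rightarrow> real) \<Rightarrow> (real \<Rightarrow> real) \<Rightarrow> (real \<Rightarrow> real) \<Rightarrow> real \<Rightarrow> real" where
  "Hfg f g f' g' x = f' x / g' x * g x - f x"

end

theory Submission
  imports Defs
begin

text \<open>
  Replacing \<open>(f, g)\<close> by \<open>(-f, -g)\<close> we may assume \<open>g' > 0\<close>; then \<open>g\<close> increases from \<open>0\<close>, so
  \<open>g > 0\<close>, and \<open>(f/g)' = g' H / g\<^sup>2\<close> with \<open>H = Hfg f g f' g'\<close>, so the monotonicity of \<open>f/g\<close> is governed by
  the sign of \<open>H\<close>. Write \<open>r = f'/g'\<close>. For \<open>x < c\<close>, \<open>H(x)\<close> is the value at \<open>x\<close> of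
  \<open>s \<mapsto> r(x) g(s) - f(s)\<close>, which vanishes at \<open>a\<^sup>+\<close> and has derivative \<open>g'(s) (r(x) - r(s)) > 0\<close>
  on \<open>(a, x)\<close>; hence \<open>H > 0\<close> on \<open>(a, c)\<close>. On \<open>(c, b)\<close> the same comparison shows that \<open>H\<close> is
  strictly decreasing. So either \<open>H(b\<^sup>-) \<ge> 0\<close> and \<open>H > 0\<close> off \<open>c\<close>, or \<open>H\<close> changes sign exactly once,
  at the point \<open>x\<^sub>a\<close> where \<open>f/g\<close> peaks. Part (B) is part (A) applied to \<open>-f\<close>.
\<close>

lemma is_interval_eoi: "is_interval (eoi a b)"
  unfolding is_interval_1 eoi_def
proof (intro ballI allI impI)
  fix x y s assume "x \<in> {x. a < ereal x \<and> ereal x < b}" "y \<in> {x. a < ereal x \<and> ereal x < b}" "x \<le> s \<and> s \<le> y"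
  then show "s \<in> {x. a < ereal x \<and> ereal x < b}"
    using order.strict_trans2[of a "ereal x" "ereal s"] order.strict_trans1[of "ereal s" "ereal y" b] by simp
qed

lemma is_interval_ereal_Ioc: "is_interval {s. a < ereal s \<and> s \<le> x}"
  unfolding is_interval_1
proof (intro ballI allI impI)
  fix p q s assume "p \<in> {s. a < ereal s \<and> s \<le> x}" "q \<in> {s. a < ereal s \<and> s \<le> x}" "p \<le> s \<and> s \<le> q"
  then show "s \<in> {s. a < ereal s \<and> s \<le> x}"
    using order.strict_trans2[of a "ereal p" "ereal s"] by simp
qed

lemma eoi_mono: "a \<le> a' \<Longrightarrow> b' \<le> b \<Longrightarrow> eoi a' b' \<subseteq> eoi a b"
  unfolding eoi_def using order.strict_trans1 order.strict_trans2 by blast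

lemma at_right_e_neq_bot: "at_right_e a \<noteq> bot"
  by (simp add: at_right_e_def)

lemma at_left_e_neq_bot: "at_left_e b \<noteq> bot"
  by (simp add: at_left_e_def)

lemma eventually_at_right_e:
  assumes "a \<noteq> \<infinity>"
  shows "eventually P (at_right_e a) \<longleftrightarrow> (\<exists>y. a < ereal y \<and> (\<forall>t. a < ereal t \<and> t < y \<longrightarrow> P t))"
  using assms by (cases a) (auto simp: at_right_e_def eventually_at_right_field eventually_at_bot_dense)

lemma eventually_at_left_e:
  assumes "b \<noteq> -\<infinity>"
  shows "eventually P (at_left_e b) \<longleftrightarrow> (\<exists>y. ereal y < b \<and> (\<forall>t. y < t \<and> ereal t < b \<longrightarrow> P t))"
  using assms by (cases b) (auto simp: at_left_e_def eventually_at_left_field eventually_at_top_dense)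

lemma strict_mono_on_minus_iff:
  fixes h :: "'a::order \<Rightarrow> real"
  shows "strict_mono_on S (\<lambda>x. - h x) \<longleftrightarrow> strict_antimono_on S h"
    and "strict_antimono_on S (\<lambda>x. - h x) \<longleftrightarrow> strict_mono_on S h"
  by (auto simp: monotone_on_def)

lemma deriv_sign_change_imp_zero:
  fixes g g' :: "real \<Rightarrow> real"
  assumes "x < y" and deriv: "\<forall>s\<in>{x..y}. (g has_real_derivative g' s) (at s)"
    and "g' x > 0" "g' y < 0"
  shows "\<exists>z. x < z \<and> z < y \<and> g' z = 0"
proof -
  have "continuous_on {x..y} g"
    using deriv by (meson DERIV_isCont continuous_at_imp_continuous_on)
  then obtain z where z: "z \<in> {x..y}" and max: "\<forall>w\<in>{x..y}. g w \<le> g z"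
    using continuous_attains_sup[of "{x..y}" g] \<open>x < y\<close> by auto
  have "(g has_real_derivative g' x) (at x)" "(g has_real_derivative g' y) (at y)"
    using deriv \<open>x < y\<close> by auto
  obtain e where "e > 0" and e: "\<forall>h>0. h < e \<longrightarrow> g x < g (x + h)"
    using DERIV_pos_inc_right[OF \<open>(g has_real_derivative g' x) (at x)\<close> \<open>g' x > 0\<close>] by blast
  have "g x < g (x + min (e/2) (y - x))"
    using e \<open>e > 0\<close> \<open>x < y\<close> by simp
  also have "\<dots> \<le> g z"
    using max \<open>e > 0\<close> \<open>x < y\<close> by simp
  finally have "z \<noteq> x" by auto
  obtain e where "e > 0" and e: "\<forall>h>0. h < e \<longrightarrow> g y < g (y - h)"
    using DERIV_neg_dec_left[OF \<open>(g has_real_derivative g' y) (at y)\<close> \<open>g' y < 0\<close>] by blast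
  have "g y < g (y - min (e/2) (y - x))"
    using e \<open>e > 0\<close> \<open>x < y\<close> by simp
  also have "\<dots> \<le> g z"
    using max \<open>e > 0\<close> \<open>x < y\<close> by simp
  finally have "z \<noteq> y" by auto
  with \<open>z \<noteq> x\<close> z have "x < z" "z < y" by auto
  moreover have "g' z = 0"
    by (rule DERIV_local_max[of g "g' z" z "min (z - x) (y - z)"])
       (use deriv max \<open>x < z\<close> \<open>z < y\<close> in \<open>auto simp: abs_less_iff\<close>)
  ultimately show ?thesis by blast
qed

lemma deriv_nonzero_imp_const_sign:
  fixes g g' :: "real \<Rightarrow> real"
  assumes S: "is_interval S" and deriv: "\<forall>s\<in>S. (g has_real_derivative g' s) (at s)"
    and nonzero: "\<forall>s\<in>S. g' s \<noteq> 0"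
  shows "(\<forall>s\<in>S. g' s > 0) \<or> (\<forall>s\<in>S. g' s < 0)"
proof (rule ccontr)
  assume "\<not> ?thesis"
  then obtain u v where "u \<in> S" "v \<in> S" "\<not> g' u < 0" "\<not> g' v > 0"
    by blast
  with nonzero have uv: "u \<in> S" "v \<in> S" "g' u > 0" "g' v < 0"
    by (auto simp: not_less less_le)
  have sub: "{p..q} \<subseteq> S" if "p \<in> S" "q \<in> S" for p q
    using mem_is_interval_1_I[OF S that] by (meson atLeastAtMost_iff subsetI)
  consider "u < v" | "v < u"
    using uv by (cases u v rule: linorder_cases) auto
  then obtain z where "z \<in> S" "g' z = 0"
  proof cases
    case 1
    have "\<forall>s\<in>{u..v}. (g has_real_derivative g' s) (at s)"
      using deriv sub[OF uv(1,2)] by blast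
    then obtain z where "u < z" "z < v" "g' z = 0"
      using deriv_sign_change_imp_zero[OF 1 _ uv(3,4)] by blast
    with sub[OF uv(1,2)] show thesis by (intro that[of z]) auto
  next
    case 2
    have "\<forall>s\<in>{v..u}. ((\<lambda>x. - g x) has_real_derivative - g' s) (at s)"
      using deriv sub[OF uv(2,1)] by (blast intro: DERIV_minus)
    then obtain z where "v < z" "z < u" "- g' z = 0"
      using deriv_sign_change_imp_zero[OF 2, of "\<lambda>x. - g x" "\<lambda>x. - g' x"] uv(3,4) by auto
    with sub[OF uv(2,1)] show thesis by (intro that[of z]) auto
  qed
  with nonzero show False by blast
qed

lemma strict_mono_on_if_deriv_pos:
  fixes h h' :: "real \<Rightarrow> real"
  assumes S: "is_interval S" and deriv: "\<forall>s\<in>S. (h has_real_derivative h' s) (at s)"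
    and pos: "\<forall>s\<in>S - {c}. h' s > 0"
  shows "strict_mono_on S h"
proof (rule monotone_onI)
  have sub: "{p..q} \<subseteq> S" if "p \<in> S" "q \<in> S" for p q
    using mem_is_interval_1_I[OF S that] by (meson atLeastAtMost_iff subsetI)
  have less: "h p < h q" if "p \<in> S" "q \<in> S" "p < q" "c \<notin> {p<..<q}" for p q
  proof (rule DERIV_pos_imp_increasing_open[OF \<open>p < q\<close>])
    show "\<exists>y. (h has_real_derivative y) (at s) \<and> 0 < y" if "p < s" "s < q" for s
    proof -
      have "s \<in> S - {c}"
        using that sub[of p q] \<open>p \<in> S\<close> \<open>q \<in> S\<close> \<open>c \<notin> {p<..<q}\<close> by auto
      then show ?thesis using deriv pos by blast
    qed
    show "continuous_on {p..q} h"
      using deriv sub[OF \<open>p \<in> S\<close> \<open>q \<in> S\<close>]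
      by (meson DERIV_isCont continuous_at_imp_continuous_on subsetD)
  qed
  fix u v assume uv: "u \<in> S" "v \<in> S" "u < v"
  show "h u < h v"
  proof (cases "c \<in> {u<..<v}")
    case True
    then have "c \<in> S" using sub[OF uv(1,2)] by auto
    have "h u < h c" using less[of u c] uv True \<open>c \<in> S\<close> by simp
    also have "\<dots> < h v" using less[of c v] uv True \<open>c \<in> S\<close> by simp
    finally show ?thesis .
  qed (use less uv in blast)
qed

lemma strict_antimono_on_if_deriv_neg:
  fixes h h' :: "real \<Rightarrow> real"
  assumes "is_interval S" and deriv: "\<forall>s\<in>S. (h has_real_derivative h' s) (at s)"
    and "\<forall>s\<in>S - {c}. h' s < 0"
  shows "strict_antimono_on S h"
  unfolding strict_mono_on_minus_iff(1)[symmetric]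
  by (rule strict_mono_on_if_deriv_pos[where h' = "\<lambda>s. - h' s" and c = c])
     (use assms in \<open>auto intro: DERIV_minus\<close>)

lemma tendsto_at_right_e_less:
  fixes h :: "real \<Rightarrow> 'b::linorder_topology"
  assumes y: "a < ereal y" and mono: "strict_mono_on {s. a < ereal s \<and> s \<le> y} h"
    and lim: "(h \<longlongrightarrow> l) (at_right_e a)"
  shows "l < h y"
proof -
  obtain z where z: "a < ereal z" "z < y"
    using ereal_dense2[OF y] by auto
  have "\<forall>t. a < ereal t \<and> t < z \<longrightarrow> h t \<le> h z"
    using mono z by (auto simp: monotone_on_def intro: less_imp_le)
  moreover have "a \<noteq> \<infinity>"
    using y by auto
  ultimately have "eventually (\<lambda>t. h t \<le> h z) (at_right_e a)"
    using z by (auto simp: eventually_at_right_e)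
  then have "l \<le> h z"
    using tendsto_upperbound[OF lim _ at_right_e_neq_bot] by blast
  also have "h z < h y"
    using mono z y by (auto simp: monotone_on_def)
  finally show ?thesis .
qed

lemma tendsto_at_left_e_less:
  fixes h :: "real \<Rightarrow> 'b::linorder_topology"
  assumes y: "ereal y < b" and anti: "strict_antimono_on {s. y \<le> s \<and> ereal s < b} h"
    and lim: "(h \<longlongrightarrow> l) (at_left_e b)"
  shows "l < h y"
proof -
  obtain z where z: "y < z" "ereal z < b"
    using ereal_dense2[OF y] by auto
  have "\<forall>t. z < t \<and> ereal t < b \<longrightarrow> h t \<le> h z"
    using anti z by (auto simp: monotone_on_def intro: less_imp_le)
  moreover have "b \<noteq> -\<infinity>"
    using y by auto
  ultimately have "eventually (\<lambda>t. h t \<le> h z) (at_left_e b)"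
    using z by (auto simp: eventually_at_left_e)
  then have "l \<le> h z"
    using tendsto_upperbound[OF lim _ at_left_e_neq_bot] by blast
  also have "h z < h y"
    using anti z y by (auto simp: monotone_on_def)
  finally show ?thesis .
qed

lemma strict_antimono_sign_change:
  fixes H :: "real \<Rightarrow> real"
  assumes anti: "strict_antimono_on (eoi (ereal c) b) H"
    and neg: "eventually (\<lambda>t. H t < 0) (at_left_e b)" and cb: "ereal c < b"
  shows "\<exists>x. c \<le> x \<and> ereal x < b \<and> (\<forall>s. c < s \<and> s < x \<longrightarrow> H s > 0)
             \<and> (\<forall>s. x < s \<and> ereal s < b \<longrightarrow> H s < 0)"
proof -
  obtain y where y: "ereal y < b" and Hy: "\<forall>t. y < t \<and> ereal t < b \<longrightarrow> H t < 0"
  proof -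
    have "b \<noteq> -\<infinity>"
      using cb by auto
    with neg that show thesis
      by (auto simp: eventually_at_left_e)
  qed
  define S where "S = insert c {s. c < s \<and> ereal s < b \<and> H s \<ge> 0}"
  have bound: "s \<le> max c y" if "s \<in> S" for s
    using that Hy by (force simp: S_def)
  then have bdd: "bdd_above S"
    by (auto simp: bdd_above_def)
  define x where "x = Sup S"
  have "c \<le> x"
    unfolding x_def by (rule cSup_upper[OF _ bdd]) (simp add: S_def)
  moreover have "ereal x < b"
  proof -
    have "x \<le> max c y"
      unfolding x_def by (rule cSup_least) (use bound in \<open>auto simp: S_def\<close>)
    then have "ereal x \<le> ereal (max c y)"
      by (simp only: ereal_less_eq(3))
    moreover have "ereal (max c y) < b"
      using cb y by (simp add: max_def)
    ultimately show ?thesis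
      by (rule order.strict_trans1)
  qed
  moreover have "H s > 0" if "c < s" "s < x" for s
  proof -
    obtain t where "t \<in> S" "s < t"
      using \<open>s < x\<close> less_cSup_iff[OF _ bdd, of s] unfolding x_def S_def by auto
    with \<open>c < s\<close> have t: "c < t" "ereal t < b" "H t \<ge> 0"
      by (auto simp: S_def)
    have "ereal s < b"
      using \<open>s < t\<close> t(2) by (simp add: order.strict_trans[of "ereal s" "ereal t" b])
    then have "H t < H s"
      using anti t \<open>c < s\<close> \<open>s < t\<close> by (auto simp: monotone_on_def eoi_def)
    with t show ?thesis by simp
  qed
  moreover have "H s < 0" if "x < s" "ereal s < b" for s
  proof -
    have "s \<notin> S"
      using \<open>x < s\<close> cSup_upper[OF _ bdd, of s] unfolding x_def by auto
    with \<open>c \<le> x\<close> that show ?thesis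
      by (auto simp: S_def)
  qed
  ultimately show ?thesis by blast
qed

lemma strict_mono_antimono_split_unique:
  fixes \<phi> :: "real \<Rightarrow> 'b::order"
  assumes "x1 \<in> eoi a b" "x2 \<in> eoi a b"
    and "strict_mono_on (eoi a (ereal x1)) \<phi>" "strict_antimono_on (eoi (ereal x1) b) \<phi>"
    and "strict_mono_on (eoi a (ereal x2)) \<phi>" "strict_antimono_on (eoi (ereal x2) b) \<phi>"
  shows "x1 = x2"
proof -
  have not_less: "\<not> p < q"
    if "p \<in> eoi a b" "q \<in> eoi a b"
      and mono: "strict_mono_on (eoi a (ereal q)) \<phi>" and anti: "strict_antimono_on (eoi (ereal p) b) \<phi>"
    for p q
  proof
    assume "p < q"
    define u v where "u = (2 * p + q) / 3" and "v = (p + 2 * q) / 3"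
    have "p < u" "u < v" "v < q" "u < q" "p < v"
      using \<open>p < q\<close> by (auto simp: u_def v_def)
    moreover have "a < ereal p" "ereal q < b"
      using that by (auto simp: eoi_def)
    ultimately have "u \<in> eoi a (ereal q) \<inter> eoi (ereal p) b" "v \<in> eoi a (ereal q) \<inter> eoi (ereal p) b"
      unfolding eoi_def by (auto intro: order.strict_trans[of a "ereal p"] order.strict_trans[of _ "ereal q" b])
    then have "\<phi> u < \<phi> v" "\<phi> v < \<phi> u"
      using mono anti \<open>u < v\<close> by (auto simp: monotone_on_def)
    then show False by simp
  qed
  show ?thesis
    using not_less[of x1 x2] not_less[of x2 x1] assms by fastforce
qed

lemma has_real_derivative_divide_Hfg:
  assumes "(f has_real_derivative f' x) (at x)" "(g has_real_derivative g' x) (at x)"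
    and "g x \<noteq> 0" "g' x \<noteq> 0"
  shows "((\<lambda>x. f x / g x) has_real_derivative g' x * Hfg f g f' g' x / (g x)\<^sup>2) (at x)"
proof -
  have "g' x * Hfg f g f' g' x = f' x * g x - f x * g' x"
    using \<open>g' x \<noteq> 0\<close> by (simp add: Hfg_def field_simps)
  then show ?thesis
    using DERIV_divide[OF assms(1,2,3)] by (simp add: power2_eq_square)
qed

lemma Hfg_pos_if_ratio_less:
  fixes f g f' g' :: "real \<Rightarrow> real"
  assumes x: "x \<in> eoi a b"
    and df: "\<forall>s\<in>eoi a b. (f has_real_derivative f' s) (at s)"
    and dg: "\<forall>s\<in>eoi a b. (g has_real_derivative g' s) (at s)"
    and g'_pos: "\<forall>s\<in>eoi a b. g' s > 0"
    and fa: "(f \<longlongrightarrow> 0) (at_right_e a)" and ga: "(g \<longlongrightarrow> 0) (at_right_e a)"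
    and less: "\<forall>s\<in>eoi a (ereal x). f' s / g' s < f' x / g' x"
  shows "Hfg f g f' g' x > 0"
proof -
  define r where "r = f' x / g' x"
  define I where "I = {s. a < ereal s \<and> s \<le> x}"
  have "I \<subseteq> eoi a b"
    using x order.strict_trans1[of "ereal _" "ereal x" b] by (auto simp: I_def eoi_def)
  have "strict_mono_on I (\<lambda>s. r * g s - f s)"
  proof (rule strict_mono_on_if_deriv_pos[where h' = "\<lambda>s. r * g' s - f' s" and c = x])
    show "is_interval I"
      unfolding I_def by (rule is_interval_ereal_Ioc)
    show "\<forall>s\<in>I. ((\<lambda>s. r * g s - f s) has_real_derivative r * g' s - f' s) (at s)"
      using df dg \<open>I \<subseteq> eoi a b\<close> by (auto intro!: derivative_eq_intros)
    show "\<forall>s\<in>I - {x}. r * g' s - f' s > 0"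
    proof
      fix s assume s: "s \<in> I - {x}"
      then have "s \<in> eoi a (ereal x)" "s \<in> eoi a b"
        using \<open>I \<subseteq> eoi a b\<close> by (auto simp: I_def eoi_def)
      moreover have "r * g' s - f' s = g' s * (r - f' s / g' s)"
        using g'_pos \<open>s \<in> eoi a b\<close> by (auto simp: field_simps)
      ultimately show "r * g' s - f' s > 0"
        using less g'_pos unfolding r_def by simp
    qed
  qed
  moreover have "((\<lambda>s. r * g s - f s) \<longlongrightarrow> 0) (at_right_e a)"
    using tendsto_diff[OF tendsto_mult[OF tendsto_const ga] fa] by simp
  moreover have "a < ereal x"
    using x by (simp add: eoi_def)
  ultimately have "0 < r * g x - f x"
    using tendsto_at_right_e_less[of a x] unfolding I_def by blast
  then show ?thesis
    by (simp add: Hfg_def r_def)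
qed

lemma Hfg_strict_antimono_if_ratio_strict_antimono:
  fixes f g f' g' :: "real \<Rightarrow> real"
  assumes S: "is_interval S"
    and df: "\<forall>s\<in>S. (f has_real_derivative f' s) (at s)"
    and dg: "\<forall>s\<in>S. (g has_real_derivative g' s) (at s)"
    and g'_pos: "\<forall>s\<in>S. g' s > 0" and g_pos: "\<forall>s\<in>S. g s > 0"
    and anti: "strict_antimono_on S (\<lambda>s. f' s / g' s)"
  shows "strict_antimono_on S (Hfg f g f' g')"
proof (rule monotone_onI)
  fix x y assume xy: "x \<in> S" "y \<in> S" "x < y"
  define r where "r = (\<lambda>s. f' s / g' s)"
  have sub: "{x..y} \<subseteq> S"
    using mem_is_interval_1_I[OF S xy(1,2)] by (meson atLeastAtMost_iff subsetI)
  have "strict_mono_on {x..y} (\<lambda>s. f s - r y * g s)"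
  proof (rule strict_mono_on_if_deriv_pos[where h' = "\<lambda>s. f' s - r y * g' s" and c = y])
    show "\<forall>s\<in>{x..y}. ((\<lambda>s. f s - r y * g s) has_real_derivative f' s - r y * g' s) (at s)"
      using df dg sub by (auto intro!: derivative_eq_intros)
    show "\<forall>s\<in>{x..y} - {y}. f' s - r y * g' s > 0"
    proof
      fix s assume s: "s \<in> {x..y} - {y}"
      then have "s \<in> S" using sub by auto
      have "r y < r s"
        using anti s \<open>s \<in> S\<close> xy unfolding r_def by (auto simp: monotone_on_def)
      moreover have "f' s - r y * g' s = g' s * (r s - r y)"
        using g'_pos \<open>s \<in> S\<close> by (auto simp: r_def field_simps)
      ultimately show "f' s - r y * g' s > 0"
        using g'_pos \<open>s \<in> S\<close> by simp
    qed
  qed simp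
  then have "f x - r y * g x < f y - r y * g y"
    using xy by (auto simp: monotone_on_def)
  moreover have "r y * g x < r x * g x"
    using anti xy g_pos mult_strict_right_mono[of "r y" "r x" "g x"]
    unfolding r_def by (auto simp: monotone_on_def)
  ultimately show "Hfg f g f' g' y < Hfg f g f' g' x"
    by (simp add: Hfg_def r_def)
qed

locale deriv_ratio_peak =
  fixes a b :: ereal and f g f' g' :: "real \<Rightarrow> real" and c :: real
  assumes df: "\<forall>s\<in>eoi a b. (f has_real_derivative f' s) (at s)"
    and dg: "\<forall>s\<in>eoi a b. (g has_real_derivative g' s) (at s)"
    and g'_pos: "\<forall>s\<in>eoi a b. g' s > 0"
    and fa: "(f \<longlongrightarrow> 0) (at_right_e a)" and ga: "(g \<longlongrightarrow> 0) (at_right_e a)"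
    and c: "c \<in> eoi a b"
    and ratio_mono: "strict_mono_on (eoi a (ereal c)) (\<lambda>x. f' x / g' x)"
    and ratio_antimono: "strict_antimono_on (eoi (ereal c) b) (\<lambda>x. f' x / g' x)"
begin

lemma eoi_left_subset: "eoi a (ereal c) \<subseteq> eoi a b"
  and eoi_right_subset: "eoi (ereal c) b \<subseteq> eoi a b"
proof -
  have "a < ereal c" "ereal c < b"
    using c by (simp_all add: eoi_def)
  then show "eoi a (ereal c) \<subseteq> eoi a b" "eoi (ereal c) b \<subseteq> eoi a b"
    by (simp_all add: eoi_mono less_imp_le)
qed

lemma g_pos:
  assumes "s \<in> eoi a b"
  shows "g s > 0"
proof -
  have "strict_mono_on (eoi a b) g"
    by (rule strict_mono_on_if_deriv_pos[where c = c]) (use is_interval_eoi dg g'_pos in auto)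
  moreover have "{t. a < ereal t \<and> t \<le> s} \<subseteq> eoi a b"
    using assms order.strict_trans1[of "ereal _" "ereal s" b] by (auto simp: eoi_def)
  ultimately have "strict_mono_on {t. a < ereal t \<and> t \<le> s} g"
    by (rule monotone_on_subset)
  with assms show ?thesis
    using tendsto_at_right_e_less[OF _ _ ga] by (simp add: eoi_def)
qed

lemma Hfg_pos_left:
  assumes "s \<in> eoi a (ereal c)"
  shows "Hfg f g f' g' s > 0"
proof (rule Hfg_pos_if_ratio_less[OF _ df dg g'_pos fa ga])
  show "s \<in> eoi a b"
    using assms eoi_left_subset by blast
  show "\<forall>t\<in>eoi a (ereal s). f' t / g' t < f' s / g' s"
    using ratio_mono assms by (auto simp: monotone_on_def eoi_def)
qed

lemma Hfg_antimono_right: "strict_antimono_on (eoi (ereal c) b) (Hfg f g f' g')"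
  using eoi_right_subset df dg g'_pos g_pos ratio_antimono
  by (intro Hfg_strict_antimono_if_ratio_strict_antimono is_interval_eoi) blast+

lemma ratio_has_derivative:
  assumes "s \<in> eoi a b"
  shows "((\<lambda>x. f x / g x) has_real_derivative g' s * Hfg f g f' g' s / (g s)\<^sup>2) (at s)"
  using assms df dg g'_pos g_pos[OF assms] by (intro has_real_derivative_divide_Hfg) auto

lemma ratio_strict_mono_on:
  assumes "is_interval S" "S \<subseteq> eoi a b" and H_pos: "\<forall>s\<in>S - {c}. Hfg f g f' g' s > 0"
  shows "strict_mono_on S (\<lambda>x. f x / g x)"
proof (rule strict_mono_on_if_deriv_pos[OF \<open>is_interval S\<close>])
  show "\<forall>s\<in>S. ((\<lambda>x. f x / g x) has_real_derivative g' s * Hfg f g f' g' s / (g s)\<^sup>2) (at s)"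
    using assms(2) ratio_has_derivative by blast
  show "\<forall>s\<in>S - {c}. g' s * Hfg f g f' g' s / (g s)\<^sup>2 > 0"
  proof
    fix s assume "s \<in> S - {c}"
    with assms(2) H_pos g'_pos g_pos show "g' s * Hfg f g f' g' s / (g s)\<^sup>2 > 0"
      by (meson DiffD1 divide_pos_pos mult_pos_pos subsetD zero_less_power)
  qed
qed

lemma ratio_strict_antimono_on:
  assumes "is_interval S" "S \<subseteq> eoi a b" and H_neg: "\<forall>s\<in>S. Hfg f g f' g' s < 0"
  shows "strict_antimono_on S (\<lambda>x. f x / g x)"
proof (rule strict_antimono_on_if_deriv_neg[OF \<open>is_interval S\<close>, where c = c])
  show "\<forall>s\<in>S. ((\<lambda>x. f x / g x) has_real_derivative g' s * Hfg f g f' g' s / (g s)\<^sup>2) (at s)"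
    using assms(2) ratio_has_derivative by blast
  show "\<forall>s\<in>S - {c}. g' s * Hfg f g f' g' s / (g s)\<^sup>2 < 0"
  proof
    fix s assume "s \<in> S - {c}"
    with assms(2) H_neg g'_pos g_pos show "g' s * Hfg f g f' g' s / (g s)\<^sup>2 < 0"
      by (meson DiffD1 divide_neg_pos mult_pos_neg subsetD zero_less_power)
  qed
qed

lemma ratio_strict_mono_if_limit_nonneg:
  assumes lim: "((\<lambda>x. ereal (Hfg f g f' g' x)) \<longlongrightarrow> L) (at_left_e b)" and "L \<ge> 0"
  shows "strict_mono_on (eoi a b) (\<lambda>x. f x / g x)"
proof (rule ratio_strict_mono_on[OF is_interval_eoi order.refl], intro ballI)
  fix s assume s: "s \<in> eoi a b - {c}"
  show "Hfg f g f' g' s > 0"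
  proof (cases "s < c")
    case True
    with s show ?thesis
      by (intro Hfg_pos_left) (simp add: eoi_def)
  next
    case False
    with s have "s \<in> eoi (ereal c) b"
      by (auto simp: eoi_def)
    then have "strict_antimono_on {t. s \<le> t \<and> ereal t < b} (\<lambda>x. ereal (Hfg f g f' g' x))"
      using Hfg_antimono_right by (auto simp: monotone_on_def eoi_def)
    then have "L < ereal (Hfg f g f' g' s)"
      using tendsto_at_left_e_less[OF _ _ lim] \<open>s \<in> eoi (ereal c) b\<close> by (simp add: eoi_def)
    with \<open>L \<ge> 0\<close> have "0 < ereal (Hfg f g f' g' s)"
      by (rule order.strict_trans1)
    then show ?thesis
      by simp
  qed
qed

lemma ratio_peak_if_limit_neg:
  assumes lim: "((\<lambda>x. ereal (Hfg f g f' g' x)) \<longlongrightarrow> L) (at_left_e b)" and "L < 0"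
  shows "\<exists>!x. x \<in> eoi a b \<and> strict_mono_on (eoi a (ereal x)) (\<lambda>x. f x / g x)
                      \<and> strict_antimono_on (eoi (ereal x) b) (\<lambda>x. f x / g x)"
proof -
  have "eventually (\<lambda>t. Hfg f g f' g' t < 0) (at_left_e b)"
    using order_tendstoD(2)[OF lim \<open>L < 0\<close>] by (simp add: zero_ereal_def)
  moreover have "a < ereal c" "ereal c < b"
    using c by (simp_all add: eoi_def)
  ultimately obtain x where x: "c \<le> x" "ereal x < b"
    and H_pos: "\<forall>s. c < s \<and> s < x \<longrightarrow> Hfg f g f' g' s > 0"
    and H_neg: "\<forall>s. x < s \<and> ereal s < b \<longrightarrow> Hfg f g f' g' s < 0"
    using strict_antimono_sign_change[OF Hfg_antimono_right] by blast
  have "a < ereal x"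
    using \<open>a < ereal c\<close> x(1) by (simp add: order.strict_trans2)
  then have "x \<in> eoi a b" "eoi a (ereal x) \<subseteq> eoi a b" "eoi (ereal x) b \<subseteq> eoi a b"
    using x(2) by (simp_all add: eoi_mono less_imp_le) (simp add: eoi_def)
  have mono: "strict_mono_on (eoi a (ereal x)) (\<lambda>x. f x / g x)"
  proof (rule ratio_strict_mono_on[OF is_interval_eoi \<open>eoi a (ereal x) \<subseteq> eoi a b\<close>], intro ballI)
    fix s assume s: "s \<in> eoi a (ereal x) - {c}"
    show "Hfg f g f' g' s > 0"
    proof (cases "s < c")
      case True
      with s show ?thesis
        by (intro Hfg_pos_left) (simp add: eoi_def)
    next
      case False
      with s H_pos show ?thesis
        by (simp add: eoi_def)
    qed
  qed
  have anti: "strict_antimono_on (eoi (ereal x) b) (\<lambda>x. f x / g x)"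
    using H_neg by (intro ratio_strict_antimono_on[OF is_interval_eoi \<open>eoi (ereal x) b \<subseteq> eoi a b\<close>])
      (simp add: eoi_def)
  show ?thesis
    using \<open>x \<in> eoi a b\<close> mono anti strict_mono_antimono_split_unique
    by (intro ex1I[of _ x]) blast+
qed

end

lemma esgn_uminus: "esgn (- L) = - esgn L"
  by (cases L) (auto simp: esgn_def)

lemma esgn_nonneg_iff: "esgn L \<ge> 0 \<longleftrightarrow> L \<ge> 0"
  and esgn_neg_iff: "esgn L < 0 \<longleftrightarrow> L < 0"
  by (auto simp: esgn_def)

lemma Hfg_uminus: "Hfg (\<lambda>x. - f x) g (\<lambda>x. - f' x) g' x = - Hfg f g f' g' x"
  and Hfg_uminus_uminus: "Hfg (\<lambda>x. - f x) (\<lambda>x. - g x) (\<lambda>x. - f' x) (\<lambda>x. - g' x) x = - Hfg f g f' g' x"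
  by (simp_all add: Hfg_def)

lemma ratio_peak_rule:
  fixes a b :: ereal and f g f' g' :: "real \<Rightarrow> real" and L :: ereal
  assumes df: "\<And>x. x \<in> eoi a b \<Longrightarrow> (f has_real_derivative f' x) (at x)"
    and dg: "\<And>x. x \<in> eoi a b \<Longrightarrow> (g has_real_derivative g' x) (at x)"
    and g'_nonzero: "\<And>x. x \<in> eoi a b \<Longrightarrow> g' x \<noteq> 0"
    and fa: "(f \<longlongrightarrow> 0) (at_right_e a)" and ga: "(g \<longlongrightarrow> 0) (at_right_e a)"
    and HL: "((\<lambda>x. ereal (Hfg f g f' g' x)) \<longlongrightarrow> L) (at_left_e b)"
    and c: "c \<in> eoi a b"
    and ratio_mono: "strict_mono_on (eoi a (ereal c)) (\<lambda>x. f' x / g' x)"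
    and ratio_antimono: "strict_antimono_on (eoi (ereal c) b) (\<lambda>x. f' x / g' x)"
  shows "((\<forall>x \<in> eoi a b. sgn (g' x) * esgn L \<ge> 0) \<longrightarrow>
           strict_mono_on (eoi a b) (\<lambda>x. f x / g x)) \<and>
         ((\<forall>x \<in> eoi a b. sgn (g' x) * esgn L < 0) \<longrightarrow>
           (\<exists>!xa. xa \<in> eoi a b \<and> strict_mono_on (eoi a (ereal xa)) (\<lambda>x. f x / g x) \<and>
                  strict_antimono_on (eoi (ereal xa) b) (\<lambda>x. f x / g x)))"
proof -
  consider "\<forall>x\<in>eoi a b. g' x > 0" | "\<forall>x\<in>eoi a b. g' x < 0"
    using deriv_nonzero_imp_const_sign[OF is_interval_eoi] dg g'_nonzero by blast
  then show ?thesis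
  proof cases
    case 1
    interpret deriv_ratio_peak a b f g f' g' c
      using df dg 1 fa ga c ratio_mono ratio_antimono by unfold_locales auto
    have "(\<forall>x \<in> eoi a b. sgn (g' x) * esgn L \<ge> 0) \<longleftrightarrow> L \<ge> 0"
      and "(\<forall>x \<in> eoi a b. sgn (g' x) * esgn L < 0) \<longleftrightarrow> L < 0"
      using 1 c by (auto simp: esgn_nonneg_iff esgn_neg_iff)
    then show ?thesis
      using ratio_strict_mono_if_limit_nonneg[OF HL] ratio_peak_if_limit_neg[OF HL] by simp
  next
    case 2
    interpret neg: deriv_ratio_peak a b "\<lambda>x. - f x" "\<lambda>x. - g x" "\<lambda>x. - f' x" "\<lambda>x. - g' x" c
      using df dg 2 tendsto_minus[OF fa] tendsto_minus[OF ga] c ratio_mono ratio_antimono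
      by unfold_locales (auto intro: DERIV_minus)
    have HL': "((\<lambda>x. ereal (Hfg (\<lambda>x. - f x) (\<lambda>x. - g x) (\<lambda>x. - f' x) (\<lambda>x. - g' x) x)) \<longlongrightarrow> - L) (at_left_e b)"
      using tendsto_uminus_ereal[OF HL] by (simp add: Hfg_uminus_uminus)
    have "(\<forall>x \<in> eoi a b. sgn (g' x) * esgn L \<ge> 0) \<longleftrightarrow> - L \<ge> 0"
      and "(\<forall>x \<in> eoi a b. sgn (g' x) * esgn L < 0) \<longleftrightarrow> - L < 0"
      using 2 c by (auto simp: esgn_nonneg_iff esgn_neg_iff esgn_uminus[symmetric])
    then show ?thesis
      using neg.ratio_strict_mono_if_limit_nonneg[OF HL'] neg.ratio_peak_if_limit_neg[OF HL'] by simp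
  qed
qed

lemma ratio_valley_rule:
  fixes a b :: ereal and f g f' g' :: "real \<Rightarrow> real" and L :: ereal
  assumes df: "\<And>x. x \<in> eoi a b \<Longrightarrow> (f has_real_derivative f' x) (at x)"
    and dg: "\<And>x. x \<in> eoi a b \<Longrightarrow> (g has_real_derivative g' x) (at x)"
    and g'_nonzero: "\<And>x. x \<in> eoi a b \<Longrightarrow> g' x \<noteq> 0"
    and fa: "(f \<longlongrightarrow> 0) (at_right_e a)" and ga: "(g \<longlongrightarrow> 0) (at_right_e a)"
    and HL: "((\<lambda>x. ereal (Hfg f g f' g' x)) \<longlongrightarrow> L) (at_left_e b)"
    and c: "c \<in> eoi a b"
    and ratio_antimono: "strict_antimono_on (eoi a (ereal c)) (\<lambda>x. f' x / g' x)"
    and ratio_mono: "strict_mono_on (eoi (ereal c) b) (\<lambda>x. f' x / g' x)"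
  shows "((\<forall>x \<in> eoi a b. sgn (g' x) * esgn L \<le> 0) \<longrightarrow>
           strict_antimono_on (eoi a b) (\<lambda>x. f x / g x)) \<and>
         ((\<forall>x \<in> eoi a b. sgn (g' x) * esgn L > 0) \<longrightarrow>
           (\<exists>!xa. xa \<in> eoi a b \<and> strict_antimono_on (eoi a (ereal xa)) (\<lambda>x. f x / g x) \<and>
                  strict_mono_on (eoi (ereal xa) b) (\<lambda>x. f x / g x)))"
proof -
  have "((\<lambda>x. ereal (Hfg (\<lambda>x. - f x) g (\<lambda>x. - f' x) g' x)) \<longlongrightarrow> - L) (at_left_e b)"
    using tendsto_uminus_ereal[OF HL] by (simp add: Hfg_uminus)
  moreover have "strict_mono_on (eoi a (ereal c)) (\<lambda>x. - f' x / g' x)"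
    and "strict_antimono_on (eoi (ereal c) b) (\<lambda>x. - f' x / g' x)"
    using ratio_antimono ratio_mono by (simp_all add: strict_mono_on_minus_iff)
  ultimately have "((\<forall>x \<in> eoi a b. sgn (g' x) * esgn (- L) \<ge> 0) \<longrightarrow>
           strict_mono_on (eoi a b) (\<lambda>x. - f x / g x)) \<and>
         ((\<forall>x \<in> eoi a b. sgn (g' x) * esgn (- L) < 0) \<longrightarrow>
           (\<exists>!xa. xa \<in> eoi a b \<and> strict_mono_on (eoi a (ereal xa)) (\<lambda>x. - f x / g x) \<and>
                  strict_antimono_on (eoi (ereal xa) b) (\<lambda>x. - f x / g x)))"
    using df dg g'_nonzero tendsto_minus[OF fa] ga c
    by (intro ratio_peak_rule) (auto intro: DERIV_minus)
  then show ?thesis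
    by (simp add: esgn_uminus strict_mono_on_minus_iff)
qed

theorem mainTheorem3:
  fixes a b :: ereal and f g f' g' :: "real \<Rightarrow> real" and L :: ereal
  assumes ab: "a < b"
    and df: "\<And>x. x \<in> eoi a b \<Longrightarrow> (f has_real_derivative f' x) (at x)"
    and dg: "\<And>x. x \<in> eoi a b \<Longrightarrow> (g has_real_derivative g' x) (at x)"
    and g'nz: "\<And>x. x \<in> eoi a b \<Longrightarrow> g' x \<noteq> 0"
    and fa: "(f \<longlongrightarrow> 0) (at_right_e a)"
    and ga: "(g \<longlongrightarrow> 0) (at_right_e a)"
    and HL: "((\<lambda>x. ereal (Hfg f g f' g' x)) \<longlongrightarrow> L) (at_left_e b)"
  shows
   "((\<exists>c \<in> eoi a b. strict_mono_on (eoi a (ereal c)) (\<lambda>x. f' x / g' x) \<and>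
                     strict_antimono_on (eoi (ereal c) b) (\<lambda>x. f' x / g' x)) \<longrightarrow>
       ((\<forall>x \<in> eoi a b. sgn (g' x) * esgn L \<ge> 0) \<longrightarrow>
           strict_mono_on (eoi a b) (\<lambda>x. f x / g x)) \<and>
       ((\<forall>x \<in> eoi a b. sgn (g' x) * esgn L < 0) \<longrightarrow>
           (\<exists>!xa. xa \<in> eoi a b \<and> strict_mono_on (eoi a (ereal xa)) (\<lambda>x. f x / g x) \<and>
                  strict_antimono_on (eoi (ereal xa) b) (\<lambda>x. f x / g x))))
    \<and>
    ((\<exists>c \<in> eoi a b. strict_antimono_on (eoi a (ereal c)) (\<lambda>x. f' x / g' x) \<and>
                     strict_mono_on (eoi (ereal c) b) (\<lambda>x. f' x / g' x)) \<longrightarrow>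
       ((\<forall>x \<in> eoi a b. sgn (g' x) * esgn L \<le> 0) \<longrightarrow>
           strict_antimono_on (eoi a b) (\<lambda>x. f x / g x)) \<and>
       ((\<forall>x \<in> eoi a b. sgn (g' x) * esgn L > 0) \<longrightarrow>
           (\<exists>!xa. xa \<in> eoi a b \<and> strict_antimono_on (eoi a (ereal xa)) (\<lambda>x. f x / g x) \<and>
                  strict_mono_on (eoi (ereal xa) b) (\<lambda>x. f x / g x))))"
  using ratio_peak_rule[OF df dg g'nz fa ga HL] ratio_valley_rule[OF df dg g'nz fa ga HL] by blast

end
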